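(* Let $\delta>0$ be the constant of the Local Ring Lemma and fix $M>0$. For every $\lambda<-1$ and $\alpha>0$ there exists $r=r(\lambda,\alpha)<\frac{\delta}{2}|\lambda|^{-4/3}$ such that for all sufficiently small $\eta>0$, with probability at least $1-\alpha$, for every point $x\in\mathbb{T}^2_M$ there is a square annulus $A_{R,2R}$ surrounding $x$ with $r/\delta\le R\le|\lambda|^{-4/3}$ on which the event $\mathcal{A}_{R,\lambda,\delta}$ holds.
   Context: $\omega^\lambda_\eta$ is near-critical site percolation on the periodic triangular lattice $\eta\mathsf{T}\cap\mathbb{T}^2_M$ (torus $\mathbb{T}^2_M=\mathbb{R}^2/(2M\mathbb{Z})^2$): Bernoulli site percolation of density $1/2+\mathrm{sgn}(\lambda)(1-e^{-|\lambda|r(\eta)})$, where $r(\eta)=\eta^2/\alpha_4(\eta,1)$ and $\alpha_4(\eta,1)$ is the critical alternating four-arm probability from the origin hexagon to distance $1$. For a square annulus $A_{R,2R}$ (between concentric squares of radii $R$ and $2R$), $\mathcal{A}_{R,\lambda,\delta}$ is the event that there exist open clusters $\mathcal{C}_1,\dots,\mathcal{C}_N$ of the restriction of $\omega^\lambda_\eta$ to $A_{R,2R}$ ($\mathcal{C}_{N+1}=\mathcal{C}_1$), each of diameter at least $\delta R$, and closed sites $y_i$ neighboring both $\mathcal{C}_i$ and $\mathcal{C}_{i+1}$, such that the two boundary components of $A_{R,2R}$ are disconnected in $A_{R,2R}\setminus\bigcup_i(\mathcal{C}_i\cup\{y_i\})$. The Local Ring Lemma provides $\delta>0$ such that for all $\lambda<-1$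 and $R\le|\lambda|^{-4/3}$, $\mathbf{P}[\mathcal{A}_{R,\lambda,\delta}]>1-1/100$ for all small $\eta$. "Surrounding $x$" means $x$ lies in the bounded component enclosed by the inner boundary. *)

theory Defs
  imports "HOL-Analysis.Analysis" "HOL-Probability.Probability"
begin

text \<open>A site (a,b) :: int \<times> int sits in row b at horizontal position a + 1/2 (b odd)
  or a (b even); rows are at height (sqrt 3 / 2) times b.  These are exactly the
  triangular lattice T (unit mesh); each site has six neighbours.\<close>

type_synonym site = "int \<times> int"

definition tri_adj :: "site \<Rightarrow> site \<Rightarrow> bool" where
  "tri_adj u v \<longleftrightarrow>
     (snd v = snd u \<and> \<bar>fst v - fst u\<bar> = 1) \<or>
     (\<bar>snd v - snd u\<bar> = 1 \<and>
        (fst v = fst u \<or> fst v = fst u + (if even (snd u) then -1 else 1)))"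

definition lattice_path :: "site set \<Rightarrow> site list \<Rightarrow> bool" where
  "lattice_path S \<gamma> \<longleftrightarrow> \<gamma> \<noteq> [] \<and> set \<gamma> \<subseteq> S \<and>
     (\<forall>i. Suc i < length \<gamma> \<longrightarrow> tri_adj (\<gamma> ! i) (\<gamma> ! Suc i))"

definition plane_pos :: "real \<Rightarrow> site \<Rightarrow> real \<times> real" where
  "plane_pos \<eta> z = (\<eta> * (real_of_int (fst z) + (if even (snd z) then 0 else 1/2)),
                     \<eta> * (sqrt 3 / 2) * real_of_int (snd z))"

text \<open>The six neighbours of the origin site, listed counterclockwise (angles 0,60,...,300 deg).\<close>
definition origin_nbrs :: "site list" where
  "origin_nbrs = [(1,0), (0,1), (-1,1), (-1,0), (-1,-1), (0,-1)]"

text \<open>Four alternating arms (open, closed, open, closed in counterclockwise order)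
  from the hexagon of the origin to Euclidean distance 1.  An arm is a lattice path
  avoiding the origin, starting at a neighbour of the origin, with all sites but the
  last at distance < 1 and the last one at distance \<ge> 1.  Arms are disjoint, and
  their starting neighbours are in counterclockwise order; arm i is open iff i is even.\<close>
definition four_arm_event :: "real \<Rightarrow> (site \<Rightarrow> bool) set" where
  "four_arm_event \<eta> = {\<omega>. \<exists>(\<gamma>::nat \<Rightarrow> site list) (k::nat \<Rightarrow> nat).
      strict_mono_on {..<4} k \<and> k 3 < 6 \<and>
      (\<forall>i<4. lattice_path (UNIV - {(0,0)}) (\<gamma> i) \<and>
              hd (\<gamma> i) = origin_nbrs ! k i \<and>
              (\<forall>z\<in>set (butlast (\<gamma> i)). norm (plane_pos \<eta> z) < 1) \<and>
              norm (plane_pos \<eta> (last (\<gamma> i))) \<ge> 1 \<and>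
              (\<forall>z\<in>set (\<gamma> i). \<omega> z = even i)) \<and>
      (\<forall>i<4. \<forall>j<4. i \<noteq> j \<longrightarrow> set (\<gamma> i) \<inter> set (\<gamma> j) = {})}"

text \<open>Sites relevant to the four-arm event (a finite set).\<close>
definition arm_sites :: "real \<Rightarrow> site set" where
  "arm_sites \<eta> = {z. norm (plane_pos \<eta> z) \<le> 1 + \<eta>}"

definition alpha4 :: "real \<Rightarrow> real" where
  "alpha4 \<eta> = measure_pmf.prob
     (Pi_pmf (arm_sites \<eta>) False (\<lambda>_. bernoulli_pmf (1/2))) (four_arm_event \<eta>)"

definition r_scale :: "real \<Rightarrow> real" where
  "r_scale \<eta> = \<eta>\<^sup>2 / alpha4 \<eta>"

definition near_crit_density :: "real \<Rightarrow> real \<Rightarrow> real" where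
  "near_crit_density lam \<eta> = 1/2 + sgn lam * (1 - exp (- \<bar>lam\<bar> * r_scale \<eta>))"

section \<open>Periodic lattice on the torus R^2/(2M Z)^2, lifted to the plane\<close>

text \<open>Number of columns / rows of the periodic lattice; rows are even in number so
  that the brick pattern is periodic.  The mesh is 2M/n_cols \<approx> \<eta> horizontally and
  2M/n_rows \<approx> \<eta> sqrt 3 / 2 vertically (an exact triangular lattice cannot be
  2M Z^2-periodic).\<close>
definition n_cols :: "real \<Rightarrow> real \<Rightarrow> int" where
  "n_cols M \<eta> = \<lceil>2 * M / \<eta>\<rceil>"

definition n_rows :: "real \<Rightarrow> real \<Rightarrow> int" where
  "n_rows M \<eta> = 2 * \<lceil>2 * M / (\<eta> * sqrt 3)\<rceil>"

text \<open>Position in R^2 (universal cover of the torus) of a site; 2M-periodic in both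
  directions under (a,b) \<mapsto> (a + n_cols, b) and (a,b) \<mapsto> (a, b + n_rows).\<close>
definition torus_pos :: "real \<Rightarrow> real \<Rightarrow> site \<Rightarrow> real \<times> real" where
  "torus_pos M \<eta> z =
     ((real_of_int (fst z) + (if even (snd z) then 0 else 1/2)) * (2 * M / real_of_int (n_cols M \<eta>)) - M,
      real_of_int (snd z) * (2 * M / real_of_int (n_rows M \<eta>)) - M)"

text \<open>True = open.\<close>
definition perc :: "real \<Rightarrow> real \<Rightarrow> real \<Rightarrow> (site \<Rightarrow> bool) pmf" where
  "perc M lam \<eta> =
     map_pmf (\<lambda>\<omega> z. \<omega> (fst z mod n_cols M \<eta>, snd z mod n_rows M \<eta>))
       (Pi_pmf ({0..<n_cols M \<eta>} \<times> {0..<n_rows M \<eta>}) False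
          (\<lambda>_. bernoulli_pmf (near_crit_density lam \<eta>)))"

definition sup_norm2 :: "real \<times> real \<Rightarrow> real" where
  "sup_norm2 p = max \<bar>fst p\<bar> \<bar>snd p\<bar>"

text \<open>x lies in the bounded component enclosed by the inner boundary of A_{R,2R}(c).\<close>
definition surrounds :: "real \<times> real \<Rightarrow> real \<Rightarrow> real \<times> real \<Rightarrow> bool" where
  "surrounds c R x \<longleftrightarrow> sup_norm2 (x - c) < R"

definition ann_sites :: "real \<Rightarrow> real \<Rightarrow> real \<times> real \<Rightarrow> real \<Rightarrow> site set" where
  "ann_sites M \<eta> c R = {z. R \<le> sup_norm2 (torus_pos M \<eta> z - c) \<and>
                            sup_norm2 (torus_pos M \<eta> z - c) \<le> 2 * R}"

definition is_cluster :: "site set \<Rightarrow> (site \<Rightarrow> bool) \<Rightarrow> site set \<Rightarrow> bool" where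
  "is_cluster A \<omega> C \<longleftrightarrow> C \<noteq> {} \<and> C \<subseteq> A \<and> (\<forall>z\<in>C. \<omega> z) \<and>
     (\<forall>u\<in>C. \<forall>v\<in>C. \<exists>\<gamma>. lattice_path C \<gamma> \<and> hd \<gamma> = u \<and> last \<gamma> = v) \<and>
     (\<forall>u\<in>C. \<forall>v\<in>A. \<omega> v \<and> tri_adj u v \<longrightarrow> v \<in> C)"

definition inner_bdry :: "real \<Rightarrow> real \<Rightarrow> real \<times> real \<Rightarrow> real \<Rightarrow> site set" where
  "inner_bdry M \<eta> c R = {z \<in> ann_sites M \<eta> c R.
      \<exists>w. tri_adj z w \<and> sup_norm2 (torus_pos M \<eta> w - c) < R}"

definition outer_bdry :: "real \<Rightarrow> real \<Rightarrow> real \<times> real \<Rightarrow> real \<Rightarrow> site set" where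
  "outer_bdry M \<eta> c R = {z \<in> ann_sites M \<eta> c R.
      \<exists>w. tri_adj z w \<and> sup_norm2 (torus_pos M \<eta> w - c) > 2 * R}"

definition separates :: "real \<Rightarrow> real \<Rightarrow> real \<times> real \<Rightarrow> real \<Rightarrow> site set \<Rightarrow> bool" where
  "separates M \<eta> c R U \<longleftrightarrow>
     \<not> (\<exists>\<gamma>. lattice_path (ann_sites M \<eta> c R - U) \<gamma> \<and>
            hd \<gamma> \<in> inner_bdry M \<eta> c R \<and> last \<gamma> \<in> outer_bdry M \<eta> c R)"

text \<open>The event \<A>_{R,\<lambda>,\<delta>} for the annulus A_{R,2R} centred at c (it depends on \<lambda>
  only through the law of \<omega>).\<close>
definition ring_event :: "real \<Rightarrow> real \<Rightarrow> real \<times> real \<Rightarrow> real \<Rightarrow> real \<Rightarrow> (site \<Rightarrow> bool) set" where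
  "ring_event M \<eta> c R \<delta> = {\<omega>. \<exists>(N::nat) (C::nat \<Rightarrow> site set) (y::nat \<Rightarrow> site).
      N \<ge> 1 \<and>
      (\<forall>i<N. is_cluster (ann_sites M \<eta> c R) \<omega> (C i) \<and>
              diameter (torus_pos M \<eta> ` C i) \<ge> \<delta> * R \<and>
              \<not> \<omega> (y i) \<and>
              (\<exists>u\<in>C i. tri_adj u (y i)) \<and>
              (\<exists>u\<in>C (Suc i mod N). tri_adj u (y i))) \<and>
      separates M \<eta> c R (\<Union>i<N. C i \<union> {y i})}"

end

theory Submission
  imports Defs
begin

text \<open>Cover the torus by a grid of cells of side R0 and look, around every cell centre, at
  the k annuli of radii R0, 4 R0, ..., 4^(k-1) R0.  They are disjoint, and the ring event of an
  annulus only depends on the sites of that annulus, so the k ring events are independent and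
  all of them fail with probability at most (1/100)^k.  The number of cells grows like 16^k,
  so a union bound over the grid shows that for large k, with probability at least 1 - \<alpha>,
  every cell, and by periodicity every point of the plane, is surrounded by a ring of
  radius between R0 and 4^k R0.\<close>

section \<open>Independence in product distributions\<close>

lemma measure_pmf_prob_pair_Times:
  "measure_pmf.prob (pair_pmf M N) (A \<times> B) = measure_pmf.prob M A * measure_pmf.prob N B"
proof -
  have "measure_pmf.prob (pair_pmf M N) (A \<times> B) =
        measure_pmf.prob (pair_pmf M N) ((A \<times> B) \<inter> set_pmf (pair_pmf M N))"
    by (rule measure_Int_set_pmf[symmetric])
  also have "(A \<times> B) \<inter> set_pmf (pair_pmf M N) = (A \<inter> set_pmf M) \<times> (B \<inter> set_pmf N)"
    by auto
  also have "measure_pmf.prob (pair_pmf M N) \<dots> =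
             measure_pmf.prob M (A \<inter> set_pmf M) * measure_pmf.prob N (B \<inter> set_pmf N)"
    by (intro measure_pmf_prob_product) auto
  finally show ?thesis by (simp add: measure_Int_set_pmf)
qed

lemma prob_Pi_pmf_conj_indep:
  assumes "finite T" "D \<subseteq> T"
    and P_local: "\<And>w w'. (\<forall>z\<in>D. w z = w' z) \<Longrightarrow> P w = P w'"
    and Q_local: "\<And>w w'. (\<forall>z\<in>T - D. w z = w' z) \<Longrightarrow> Q w = Q w'"
  shows "measure_pmf.prob (Pi_pmf T d p) {w. P w \<and> Q w} =
         measure_pmf.prob (Pi_pmf T d p) {w. P w} * measure_pmf.prob (Pi_pmf T d p) {w. Q w}"
proof -
  let ?glue = "\<lambda>(f, g) x. if x \<in> D then f x else g x"
  let ?pair = "pair_pmf (Pi_pmf D d p) (Pi_pmf (T - D) d p)"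
  have "T = D \<union> (T - D)" using assms(2) by auto
  then have split: "Pi_pmf T d p = map_pmf ?glue ?pair"
    using Pi_pmf_union[of D "T - D" d p] assms(1,2) finite_subset by auto
  have P_glue: "P (\<lambda>x. if x \<in> D then f x else g x) = P f" for f g by (rule P_local) auto
  have Q_glue: "Q (\<lambda>x. if x \<in> D then f x else g x) = Q g" for f g by (rule Q_local) auto
  have "measure_pmf.prob (Pi_pmf T d p) {w. P w \<and> Q w} =
        measure_pmf.prob ?pair ({f. P f} \<times> {g. Q g})"
    unfolding split measure_map_pmf by (intro arg_cong[where f="measure _"]) (auto simp: P_glue Q_glue)
  moreover have "measure_pmf.prob (Pi_pmf T d p) {w. P w} = measure_pmf.prob ?pair ({f. P f} \<times> UNIV)"
    unfolding split measure_map_pmf by (intro arg_cong[where f="measure _"]) (auto simp: P_glue)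
  moreover have "measure_pmf.prob (Pi_pmf T d p) {w. Q w} = measure_pmf.prob ?pair (UNIV \<times> {g. Q g})"
    unfolding split measure_map_pmf by (intro arg_cong[where f="measure _"]) (auto simp: Q_glue)
  ultimately show ?thesis by (simp add: measure_pmf_prob_pair_Times)
qed

lemma prob_Pi_pmf_all_indep:
  fixes k :: nat
  assumes "finite T"
    and "\<And>j. j < k \<Longrightarrow> D j \<subseteq> T"
    and "\<And>i j. i < k \<Longrightarrow> j < k \<Longrightarrow> i \<noteq> j \<Longrightarrow> D i \<inter> D j = {}"
    and "\<And>j w w'. j < k \<Longrightarrow> (\<forall>z\<in>D j. w z = w' z) \<Longrightarrow> P j w = P j w'"
  shows "measure_pmf.prob (Pi_pmf T d p) {w. \<forall>j<k. P j w} =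
         (\<Prod>j<k. measure_pmf.prob (Pi_pmf T d p) {w. P j w})"
  using assms(2-)
proof (induction k)
  case 0
  then show ?case by simp
next
  case (Suc k)
  have "{w. \<forall>j<Suc k. P j w} = {w. (\<forall>j<k. P j w) \<and> P k w}"
    using less_Suc_eq by auto
  moreover have "measure_pmf.prob (Pi_pmf T d p) {w. (\<forall>j<k. P j w) \<and> P k w} =
        measure_pmf.prob (Pi_pmf T d p) {w. \<forall>j<k. P j w} * measure_pmf.prob (Pi_pmf T d p) {w. P k w}"
  proof (rule prob_Pi_pmf_conj_indep[OF assms(1), where D = "\<Union>j<k. D j"])
    show "(\<Union>j<k. D j) \<subseteq> T" using Suc.prems(1) by (meson UN_least less_SucI lessThan_iff)
    show "(\<forall>j<k. P j w) = (\<forall>j<k. P j w')" if "\<forall>z\<in>\<Union>j<k. D j. w z = w' z" for w w'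
      using that Suc.prems(3) by (metis UN_I lessThan_iff less_SucI)
    show "P k w = P k w'" if "\<forall>z\<in>T - (\<Union>j<k. D j). w z = w' z" for w w'
    proof (rule Suc.prems(3))
      have "D k \<inter> D j = {}" if "j < k" for j
        using Suc.prems(2)[of k j] that by simp
      then have "D k \<subseteq> T - (\<Union>j<k. D j)"
        using Suc.prems(1)[of k] by auto
      then show "\<forall>z\<in>D k. w z = w' z" using that by blast
    qed simp
  qed
  moreover have "measure_pmf.prob (Pi_pmf T d p) {w. \<forall>j<k. P j w} =
                 (\<Prod>j<k. measure_pmf.prob (Pi_pmf T d p) {w. P j w})"
    using Suc.prems by (intro Suc.IH) auto
  ultimately show ?case by simp
qed

section \<open>Geometry of the periodic lattice\<close>

lemma sup_norm2_add_le: "sup_norm2 (a + b) \<le> sup_norm2 a + sup_norm2 b"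
  unfolding sup_norm2_def by (cases a; cases b) auto

lemma sup_norm2_minus_commute: "sup_norm2 (a - b) = sup_norm2 (b - a)"
  unfolding sup_norm2_def by (cases a; cases b) auto

lemma sup_norm2_diff_le: "sup_norm2 (a - c) \<le> sup_norm2 (a - b) + sup_norm2 (b - c)"
  using sup_norm2_add_le[of "a - b" "b - c"] by simp

lemma diameter_translation:
  fixes S :: "'a::real_normed_vector set"
  shows "diameter ((\<lambda>x. x + d) ` S) = diameter S"
proof -
  have "bounded ((\<lambda>x. x + d) ` S) \<longleftrightarrow> bounded S"
    using bounded_translation[of "(\<lambda>x. x + d) ` S" "-d"] bounded_translation[of S d]
    by (auto simp: image_image add.commute)
  moreover have "(\<lambda>x. x + d) ` S \<times> (\<lambda>x. x + d) ` S = (\<lambda>(x, y). (x + d, y + d)) ` (S \<times> S)"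
    by auto
  then have "(\<lambda>(x, y). dist x y) ` ((\<lambda>x. x + d) ` S \<times> (\<lambda>x. x + d) ` S) =
             (\<lambda>(x, y). dist x y) ` (S \<times> S)"
    by (simp add: image_image dist_norm case_prod_unfold)
  ultimately show ?thesis unfolding diameter_def by simp
qed

lemma tri_adj_translate:
  assumes "even Y"
  shows "tri_adj (fst u + X, snd u + Y) (fst v + X, snd v + Y) = tri_adj u v"
proof -
  have "even (snd u + Y) = even (snd u)" using assms by auto
  then show ?thesis unfolding tri_adj_def by auto
qed

lemma tri_adj_row_offsets:
  assumes "tri_adj u v"
  shows "\<bar>(real_of_int (fst v) + (if even (snd v) then 0 else 1/2)) -
          (real_of_int (fst u) + (if even (snd u) then 0 else 1/2))\<bar> \<le> 1"
    and "\<bar>real_of_int (snd v) - real_of_int (snd u)\<bar> \<le> 1"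
proof -
  obtain a b a' b' where uv: "u = (a, b)" "v = (a', b')" by (cases u, cases v)
  have "b' = b \<and> \<bar>a' - a\<bar> = 1 \<or>
        \<bar>b' - b\<bar> = 1 \<and> (a' = a \<or> a' = a + (if even b then -1 else 1))"
    using assms uv unfolding tri_adj_def by simp
  moreover have "even b' \<longleftrightarrow> odd b" if "\<bar>b' - b\<bar> = 1"
  proof -
    have "b' = b + 1 \<or> b' = b - 1" using that by arith
    then show ?thesis by auto
  qed
  ultimately consider "b' = b" "\<bar>a' - a\<bar> = 1"
    | "even b' \<longleftrightarrow> odd b" "a' = a \<or> a' = a + (if even b then -1 else 1)"
    by blast
  then show "\<bar>(real_of_int (fst v) + (if even (snd v) then 0 else 1/2)) -
              (real_of_int (fst u) + (if even (snd u) then 0 else 1/2))\<bar> \<le> 1"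
  proof cases
    case 1
    then have "\<bar>real_of_int a' - real_of_int a\<bar> = 1" by linarith
    with 1 show ?thesis using uv by simp
  next
    case 2
    then show ?thesis using uv by (cases "even b") auto
  qed
  show "\<bar>real_of_int (snd v) - real_of_int (snd u)\<bar> \<le> 1"
    using assms unfolding tri_adj_def by auto
qed

lemma n_cols_pos: "M > 0 \<Longrightarrow> \<eta> > 0 \<Longrightarrow> n_cols M \<eta> > 0"
  unfolding n_cols_def by simp

lemma n_rows_pos: "M > 0 \<Longrightarrow> \<eta> > 0 \<Longrightarrow> n_rows M \<eta> > 0"
  unfolding n_rows_def by simp

lemma torus_mesh_le:
  assumes "M > 0" "\<eta> > 0"
  shows "2 * M / n_cols M \<eta> \<le> \<eta>" "2 * M / n_rows M \<eta> \<le> \<eta>"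
proof -
  have "2 * M / \<eta> \<le> real_of_int (n_cols M \<eta>)"
    unfolding n_cols_def by linarith
  then show "2 * M / n_cols M \<eta> \<le> \<eta>"
    using assms n_cols_pos[OF assms] by (simp add: field_simps)
  have "sqrt 3 \<le> 2" by (simp add: real_sqrt_le_iff[of 3 4, simplified])
  then have "2 * M / \<eta> \<le> 2 * (2 * M / (\<eta> * sqrt 3))"
    using assms by (simp add: field_simps)
  also have "\<dots> \<le> real_of_int (n_rows M \<eta>)"
    unfolding n_rows_def by linarith
  finally show "2 * M / n_rows M \<eta> \<le> \<eta>"
    using assms n_rows_pos[OF assms] by (simp add: field_simps)
qed

lemma torus_pos_tri_adj_close:
  assumes "tri_adj u v" "M > 0" "\<eta> > 0"
  shows "sup_norm2 (torus_pos M \<eta> v - torus_pos M \<eta> u) \<le> \<eta>"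
proof -
  have scaled: "\<bar>x * s\<bar> \<le> \<eta>" if "\<bar>x\<bar> \<le> 1" "0 < s" "s \<le> \<eta>" for x s :: real
  proof -
    have "\<bar>x\<bar> * s \<le> 1 * s" using that by (intro mult_right_mono) auto
    moreover have "\<bar>x * s\<bar> = \<bar>x\<bar> * s" using that by (simp add: abs_mult)
    ultimately show ?thesis using that by linarith
  qed
  define sx where "sx = 2 * M / real_of_int (n_cols M \<eta>)"
  define sy where "sy = 2 * M / real_of_int (n_rows M \<eta>)"
  have mesh: "sx > 0" "sy > 0" "sx \<le> \<eta>" "sy \<le> \<eta>"
    using assms n_cols_pos n_rows_pos torus_mesh_le unfolding sx_def sy_def by auto
  have "fst (torus_pos M \<eta> v - torus_pos M \<eta> u) =
      ((real_of_int (fst v) + (if even (snd v) then 0 else 1/2)) -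
       (real_of_int (fst u) + (if even (snd u) then 0 else 1/2))) * sx"
    "snd (torus_pos M \<eta> v - torus_pos M \<eta> u) = (real_of_int (snd v) - real_of_int (snd u)) * sy"
    unfolding torus_pos_def sx_def sy_def by (simp_all add: algebra_simps diff_divide_distrib)
  then have "\<bar>fst (torus_pos M \<eta> v - torus_pos M \<eta> u)\<bar> \<le> \<eta>"
    "\<bar>snd (torus_pos M \<eta> v - torus_pos M \<eta> u)\<bar> \<le> \<eta>"
    using scaled[OF tri_adj_row_offsets(1)[OF assms(1)] mesh(1,3)]
      scaled[OF tri_adj_row_offsets(2)[OF assms(1)] mesh(2,4)] by simp_all
  then show ?thesis unfolding sup_norm2_def by simp
qed

section \<open>The ring event depends only on a thickened annulus\<close>

definition thick_annulus :: "real \<Rightarrow> real \<Rightarrow> real \<times> real \<Rightarrow> real \<Rightarrow> real \<Rightarrow> site set" where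
  "thick_annulus M \<eta> c R h = {z. R - h \<le> sup_norm2 (torus_pos M \<eta> z - c) \<and>
                                 sup_norm2 (torus_pos M \<eta> z - c) \<le> 2 * R + h}"

lemma ann_sites_subset_thick_annulus:
  "h \<ge> 0 \<Longrightarrow> ann_sites M \<eta> c R \<subseteq> thick_annulus M \<eta> c R h"
  unfolding ann_sites_def thick_annulus_def by auto

lemma tri_adj_ann_sites_in_thick_annulus:
  assumes "u \<in> ann_sites M \<eta> c R" "tri_adj u v" "M > 0" "\<eta> > 0"
  shows "v \<in> thick_annulus M \<eta> c R \<eta>"
proof -
  have "sup_norm2 (torus_pos M \<eta> v - torus_pos M \<eta> u) \<le> \<eta>"
    by (rule torus_pos_tri_adj_close[OF assms(2-4)])
  then have "sup_norm2 (torus_pos M \<eta> u - torus_pos M \<eta> v) \<le> \<eta>"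
    by (simp add: sup_norm2_minus_commute)
  moreover note sup_norm2_diff_le[where a = "torus_pos M \<eta> v" and b = "torus_pos M \<eta> u" and c = c]
    sup_norm2_diff_le[where a = "torus_pos M \<eta> u" and b = "torus_pos M \<eta> v" and c = c]
  moreover have "R \<le> sup_norm2 (torus_pos M \<eta> u - c)" "sup_norm2 (torus_pos M \<eta> u - c) \<le> 2 * R"
    using assms(1) unfolding ann_sites_def by auto
  ultimately show ?thesis
    using \<open>sup_norm2 (torus_pos M \<eta> v - torus_pos M \<eta> u) \<le> \<eta>\<close>
    unfolding thick_annulus_def by simp
qed

lemma is_cluster_cong:
  "is_cluster A \<omega> C \<Longrightarrow> (\<And>z. z \<in> A \<Longrightarrow> \<omega> z = \<omega>' z) \<Longrightarrow> is_cluster A \<omega>' C"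
  unfolding is_cluster_def by (metis subsetD)

text \<open>The annulus has to be thickened by one mesh width because the closed sites y_i
  may lie just outside it.\<close>

lemma ring_event_local:
  assumes "M > 0" "\<eta> > 0"
    and agree: "\<And>z. z \<in> thick_annulus M \<eta> c R \<eta> \<Longrightarrow> \<omega> z = \<omega>' z"
    and "\<omega> \<in> ring_event M \<eta> c R \<delta>"
  shows "\<omega>' \<in> ring_event M \<eta> c R \<delta>"
proof -
  let ?A = "ann_sites M \<eta> c R"
  obtain N C y where N: "N \<ge> 1"
    and ring: "\<forall>i<N. is_cluster ?A \<omega> (C i) \<and> diameter (torus_pos M \<eta> ` C i) \<ge> \<delta> * R \<and>
              \<not> \<omega> (y i) \<and> (\<exists>u\<in>C i. tri_adj u (y i)) \<and> (\<exists>u\<in>C (Suc i mod N). tri_adj u (y i))"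
    and sep: "separates M \<eta> c R (\<Union>i<N. C i \<union> {y i})"
    using assms(4) unfolding ring_event_def by blast
  have "\<omega> z = \<omega>' z" if "z \<in> ?A" for z
    using that agree ann_sites_subset_thick_annulus[OF less_imp_le[OF assms(2)]] by blast
  then have "is_cluster ?A \<omega>' (C i)" if "i < N" for i
    using ring that is_cluster_cong by blast
  moreover have "\<not> \<omega>' (y i)" if "i < N" for i
  proof -
    obtain u where "u \<in> C i" "tri_adj u (y i)" using ring \<open>i < N\<close> by blast
    moreover have "C i \<subseteq> ?A" using ring \<open>i < N\<close> unfolding is_cluster_def by blast
    ultimately have "y i \<in> thick_annulus M \<eta> c R \<eta>"
      using tri_adj_ann_sites_in_thick_annulus assms(1,2) by blast
    then show ?thesis using agree[of "y i"] ring \<open>i < N\<close> by simp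
  qed
  ultimately show ?thesis
    using N ring sep unfolding ring_event_def by blast
qed

section \<open>The ring event is invariant under lattice translations\<close>

definition lattice_translation :: "real \<Rightarrow> real \<Rightarrow> (site \<Rightarrow> site) \<Rightarrow> real \<times> real \<Rightarrow> bool" where
  "lattice_translation M \<eta> \<sigma> d \<longleftrightarrow>
     (\<forall>u v. tri_adj u v \<longrightarrow> tri_adj (\<sigma> u) (\<sigma> v)) \<and>
     (\<forall>z. torus_pos M \<eta> (\<sigma> z) = torus_pos M \<eta> z + d)"

lemma lattice_translation_tri_adj:
  "lattice_translation M \<eta> \<sigma> d \<Longrightarrow> tri_adj u v \<Longrightarrow> tri_adj (\<sigma> u) (\<sigma> v)"
  unfolding lattice_translation_def by blast

lemma lattice_translation_torus_pos:
  "lattice_translation M \<eta> \<sigma> d \<Longrightarrow> torus_pos M \<eta> (\<sigma> z) = torus_pos M \<eta> z + d"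
  unfolding lattice_translation_def by blast

lemma lattice_translation_torus_pos_diff:
  "lattice_translation M \<eta> \<sigma> d \<Longrightarrow> torus_pos M \<eta> (\<sigma> z) - (c + d) = torus_pos M \<eta> z - c"
  by (simp add: lattice_translation_torus_pos algebra_simps)

lemma ann_sites_translation:
  "lattice_translation M \<eta> \<sigma> d \<Longrightarrow> z \<in> ann_sites M \<eta> c R \<Longrightarrow> \<sigma> z \<in> ann_sites M \<eta> (c + d) R"
  unfolding ann_sites_def by (simp add: lattice_translation_torus_pos_diff)

lemma inner_bdry_translation:
  assumes \<sigma>: "lattice_translation M \<eta> \<sigma> d" and "z \<in> inner_bdry M \<eta> c R"
  shows "\<sigma> z \<in> inner_bdry M \<eta> (c + d) R"
proof -
  obtain w where "z \<in> ann_sites M \<eta> c R" "tri_adj z w" "sup_norm2 (torus_pos M \<eta> w - c) < R"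
    using assms(2) unfolding inner_bdry_def by blast
  moreover have "sup_norm2 (torus_pos M \<eta> (\<sigma> w) - (c + d)) < R"
    using \<open>sup_norm2 (torus_pos M \<eta> w - c) < R\<close> by (simp add: lattice_translation_torus_pos_diff[OF \<sigma>])
  ultimately show ?thesis
    using ann_sites_translation[OF \<sigma>] lattice_translation_tri_adj[OF \<sigma>]
    unfolding inner_bdry_def by blast
qed

lemma outer_bdry_translation:
  assumes \<sigma>: "lattice_translation M \<eta> \<sigma> d" and "z \<in> outer_bdry M \<eta> c R"
  shows "\<sigma> z \<in> outer_bdry M \<eta> (c + d) R"
proof -
  obtain w where "z \<in> ann_sites M \<eta> c R" "tri_adj z w" "sup_norm2 (torus_pos M \<eta> w - c) > 2 * R"
    using assms(2) unfolding outer_bdry_def by blast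
  moreover have "sup_norm2 (torus_pos M \<eta> (\<sigma> w) - (c + d)) > 2 * R"
    using \<open>sup_norm2 (torus_pos M \<eta> w - c) > 2 * R\<close> by (simp add: lattice_translation_torus_pos_diff[OF \<sigma>])
  ultimately show ?thesis
    using ann_sites_translation[OF \<sigma>] lattice_translation_tri_adj[OF \<sigma>]
    unfolding outer_bdry_def by blast
qed

lemma lattice_path_map:
  assumes "lattice_path S \<gamma>" "\<And>u v. tri_adj u v \<Longrightarrow> tri_adj (f u) (f v)" "f ` S \<subseteq> S'"
  shows "lattice_path S' (map f \<gamma>)"
proof -
  have "set (map f \<gamma>) \<subseteq> S'"
    using assms(1,3) unfolding lattice_path_def by auto
  then show ?thesis
    using assms(1,2) unfolding lattice_path_def by simp
qed

lemma is_cluster_translation: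
  assumes \<sigma>: "lattice_translation M \<eta> \<sigma> d" and \<tau>: "lattice_translation M \<eta> \<tau> (- d)"
    and inverse: "\<And>z. \<tau> (\<sigma> z) = z" "\<And>z. \<sigma> (\<tau> z) = z"
    and periodic: "\<And>z. \<omega> (\<sigma> z) = \<omega> z"
    and cluster: "is_cluster (ann_sites M \<eta> c R) \<omega> C"
  shows "is_cluster (ann_sites M \<eta> (c + d) R) \<omega> (\<sigma> ` C)"
  unfolding is_cluster_def
proof (intro conjI ballI impI)
  have "C \<noteq> {}" "C \<subseteq> ann_sites M \<eta> c R" "\<forall>z\<in>C. \<omega> z"
    using cluster unfolding is_cluster_def by blast+
  then show "\<sigma> ` C \<noteq> {}" "\<sigma> ` C \<subseteq> ann_sites M \<eta> (c + d) R" "\<And>z. z \<in> \<sigma> ` C \<Longrightarrow> \<omega> z"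
    using ann_sites_translation[OF \<sigma>, of _ c R] periodic by auto
  show "\<exists>\<gamma>. lattice_path (\<sigma> ` C) \<gamma> \<and> hd \<gamma> = u' \<and> last \<gamma> = v'"
    if "u' \<in> \<sigma> ` C" and "v' \<in> \<sigma> ` C" for u' v'
  proof -
    from that obtain u v where uv: "u \<in> C" "v \<in> C" "u' = \<sigma> u" "v' = \<sigma> v" by blast
    then obtain \<gamma> where \<gamma>: "lattice_path C \<gamma>" "hd \<gamma> = u" "last \<gamma> = v"
      using cluster unfolding is_cluster_def by blast
    then have "\<gamma> \<noteq> []" unfolding lattice_path_def by blast
    moreover have "lattice_path (\<sigma> ` C) (map \<sigma> \<gamma>)"
      by (rule lattice_path_map[OF \<gamma>(1)]) (simp_all add: lattice_translation_tri_adj[OF \<sigma>])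
    ultimately show ?thesis
      using \<gamma> uv by (intro exI[of _ "map \<sigma> \<gamma>"]) (simp add: hd_map last_map)
  qed
  show "v' \<in> \<sigma> ` C"
    if "u' \<in> \<sigma> ` C" "v' \<in> ann_sites M \<eta> (c + d) R" "\<omega> v' \<and> tri_adj u' v'" for u' v'
  proof -
    from that(1) obtain u where "u \<in> C" "u' = \<sigma> u" by blast
    have "\<tau> v' \<in> ann_sites M \<eta> c R"
      using ann_sites_translation[OF \<tau> that(2)] by simp
    moreover have "\<omega> (\<tau> v')" using that(3) periodic[of "\<tau> v'"] inverse(2) by simp
    moreover have "tri_adj u (\<tau> v')"
      using lattice_translation_tri_adj[OF \<tau>, of u' v'] that(3) inverse(1) \<open>u' = \<sigma> u\<close> by simp
    ultimately have "\<tau> v' \<in> C" using cluster \<open>u \<in> C\<close> unfolding is_cluster_def by blast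
    then show ?thesis using inverse(2) by (metis image_eqI)
  qed
qed

lemma separates_translation:
  assumes \<tau>: "lattice_translation M \<eta> \<tau> (- d)" and inverse: "\<And>z. \<sigma> (\<tau> z) = z"
    and "separates M \<eta> c R U"
  shows "separates M \<eta> (c + d) R (\<sigma> ` U)"
  unfolding separates_def
proof
  assume "\<exists>\<gamma>. lattice_path (ann_sites M \<eta> (c + d) R - \<sigma> ` U) \<gamma> \<and>
            hd \<gamma> \<in> inner_bdry M \<eta> (c + d) R \<and> last \<gamma> \<in> outer_bdry M \<eta> (c + d) R"
  then obtain \<gamma> where \<gamma>: "lattice_path (ann_sites M \<eta> (c + d) R - \<sigma> ` U) \<gamma>"
    "hd \<gamma> \<in> inner_bdry M \<eta> (c + d) R" "last \<gamma> \<in> outer_bdry M \<eta> (c + d) R"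
    by blast
  have "\<tau> z \<in> ann_sites M \<eta> c R - U" if "z \<in> ann_sites M \<eta> (c + d) R - \<sigma> ` U" for z
  proof -
    have "\<tau> z \<notin> U" using that inverse[of z] by (metis DiffD2 image_eqI)
    then show ?thesis using ann_sites_translation[OF \<tau>, of z "c + d" R] that by simp
  qed
  then have "lattice_path (ann_sites M \<eta> c R - U) (map \<tau> \<gamma>)"
    by (intro lattice_path_map[OF \<gamma>(1)]) (auto simp: lattice_translation_tri_adj[OF \<tau>])
  moreover have "\<gamma> \<noteq> []" using \<gamma>(1) unfolding lattice_path_def by blast
  then have "hd (map \<tau> \<gamma>) \<in> inner_bdry M \<eta> c R" "last (map \<tau> \<gamma>) \<in> outer_bdry M \<eta> c R"
    using inner_bdry_translation[OF \<tau> \<gamma>(2)] outer_bdry_translation[OF \<tau> \<gamma>(3)]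
    by (simp_all add: hd_map last_map)
  ultimately show False
    using assms(3) unfolding separates_def by blast
qed

lemma ring_event_translation:
  assumes \<sigma>: "lattice_translation M \<eta> \<sigma> d" and \<tau>: "lattice_translation M \<eta> \<tau> (- d)"
    and inverse: "\<And>z. \<tau> (\<sigma> z) = z" "\<And>z. \<sigma> (\<tau> z) = z"
    and periodic: "\<And>z. \<omega> (\<sigma> z) = \<omega> z"
    and "\<omega> \<in> ring_event M \<eta> c R \<delta>"
  shows "\<omega> \<in> ring_event M \<eta> (c + d) R \<delta>"
proof -
  obtain N C y where N: "N \<ge> 1"
    and ring: "\<forall>i<N. is_cluster (ann_sites M \<eta> c R) \<omega> (C i) \<and>
              diameter (torus_pos M \<eta> ` C i) \<ge> \<delta> * R \<and> \<not> \<omega> (y i) \<and>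
              (\<exists>u\<in>C i. tri_adj u (y i)) \<and> (\<exists>u\<in>C (Suc i mod N). tri_adj u (y i))"
    and sep: "separates M \<eta> c R (\<Union>i<N. C i \<union> {y i})"
    using assms(6) unfolding ring_event_def by blast
  have "\<forall>i<N. is_cluster (ann_sites M \<eta> (c + d) R) \<omega> (\<sigma> ` C i) \<and>
              diameter (torus_pos M \<eta> ` \<sigma> ` C i) \<ge> \<delta> * R \<and> \<not> \<omega> (\<sigma> (y i)) \<and>
              (\<exists>u\<in>\<sigma> ` C i. tri_adj u (\<sigma> (y i))) \<and>
              (\<exists>u\<in>\<sigma> ` C (Suc i mod N). tri_adj u (\<sigma> (y i)))"
  proof (intro allI impI conjI)
    fix i assume "i < N"
    show "is_cluster (ann_sites M \<eta> (c + d) R) \<omega> (\<sigma> ` C i)"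
      by (rule is_cluster_translation[OF \<sigma> \<tau>]) (use inverse periodic ring \<open>i < N\<close> in auto)
    have "torus_pos M \<eta> ` \<sigma> ` C i = (\<lambda>x. x + d) ` torus_pos M \<eta> ` C i"
      by (simp add: image_image lattice_translation_torus_pos[OF \<sigma>])
    then show "diameter (torus_pos M \<eta> ` \<sigma> ` C i) \<ge> \<delta> * R"
      using ring \<open>i < N\<close> by (simp add: diameter_translation)
    show "\<not> \<omega> (\<sigma> (y i))" using ring \<open>i < N\<close> periodic by simp
    show "\<exists>u\<in>\<sigma> ` C i. tri_adj u (\<sigma> (y i))" "\<exists>u\<in>\<sigma> ` C (Suc i mod N). tri_adj u (\<sigma> (y i))"
      using ring \<open>i < N\<close> lattice_translation_tri_adj[OF \<sigma>] by blast+
  qed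
  moreover have "\<sigma> ` (\<Union>i<N. C i \<union> {y i}) = (\<Union>i<N. \<sigma> ` C i \<union> {\<sigma> (y i)})"
    by auto
  then have "separates M \<eta> (c + d) R (\<Union>i<N. \<sigma> ` C i \<union> {\<sigma> (y i)})"
    using separates_translation[OF \<tau> inverse(2) sep] by simp
  ultimately show ?thesis
    using N unfolding ring_event_def mem_Collect_eq
    by (intro exI[of _ N] exI[of _ "\<lambda>i. \<sigma> ` C i"] exI[of _ "\<lambda>i. \<sigma> (y i)"]) simp
qed

text \<open>Since the number of rows is even, a shift by whole periods preserves the brick pattern
  of the lattice.\<close>

definition lattice_shift :: "real \<Rightarrow> real \<Rightarrow> int \<Rightarrow> int \<Rightarrow> site \<Rightarrow> site" where
  "lattice_shift M \<eta> p q z = (fst z + n_cols M \<eta> * p, snd z + n_rows M \<eta> * q)"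

lemma lattice_shift_uminus [simp]:
  "lattice_shift M \<eta> (- p) (- q) (lattice_shift M \<eta> p q z) = z"
  unfolding lattice_shift_def by simp

lemma lattice_translation_lattice_shift:
  assumes "M > 0" "\<eta> > 0"
  shows "lattice_translation M \<eta> (lattice_shift M \<eta> p q) (2 * M * of_int p, 2 * M * of_int q)"
proof -
  have rows_even: "even (n_rows M \<eta>)" unfolding n_rows_def by simp
  then have adj: "tri_adj (lattice_shift M \<eta> p q u) (lattice_shift M \<eta> p q v) = tri_adj u v" for u v
    unfolding lattice_shift_def by (intro tri_adj_translate) simp
  have "n_cols M \<eta> \<noteq> 0" "n_rows M \<eta> \<noteq> 0"
    using n_cols_pos[OF assms] n_rows_pos[OF assms] by simp_all
  then have "torus_pos M \<eta> (lattice_shift M \<eta> p q z) =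
                   torus_pos M \<eta> z + (2 * M * of_int p, 2 * M * of_int q)" for z
    unfolding torus_pos_def lattice_shift_def using rows_even by (simp add: field_simps)
  with adj show ?thesis unfolding lattice_translation_def by simp
qed

lemma ring_event_periodic:
  assumes "M > 0" "\<eta> > 0"
    and periodic: "\<And>z. \<omega> (lattice_shift M \<eta> p q z) = \<omega> z"
    and "\<omega> \<in> ring_event M \<eta> c R \<delta>"
  shows "\<omega> \<in> ring_event M \<eta> (c + (2 * M * of_int p, 2 * M * of_int q)) R \<delta>"
proof (rule ring_event_translation[OF lattice_translation_lattice_shift[OF assms(1,2)]])
  show "lattice_translation M \<eta> (lattice_shift M \<eta> (- p) (- q)) (- (2 * M * of_int p, 2 * M * of_int q))"
    using lattice_translation_lattice_shift[OF assms(1,2), of "- p" "- q"] by simp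
  show "lattice_shift M \<eta> p q (lattice_shift M \<eta> (- p) (- q) z) = z" for z
    using lattice_shift_uminus[of M \<eta> "- p" "- q" z] by simp
qed (use assms in auto)

section \<open>Independence across scales\<close>

definition torus_site :: "real \<Rightarrow> real \<Rightarrow> site \<Rightarrow> site" where
  "torus_site M \<eta> z = (fst z mod n_cols M \<eta>, snd z mod n_rows M \<eta>)"

definition torus_pmf :: "real \<Rightarrow> real \<Rightarrow> real \<Rightarrow> (site \<Rightarrow> bool) pmf" where
  "torus_pmf M lam \<eta> = Pi_pmf ({0..<n_cols M \<eta>} \<times> {0..<n_rows M \<eta>}) False
                          (\<lambda>_. bernoulli_pmf (near_crit_density lam \<eta>))"

lemma perc_eq_map_torus_pmf:
  "perc M lam \<eta> = map_pmf (\<lambda>w. w \<circ> torus_site M \<eta>) (torus_pmf M lam \<eta>)"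
  unfolding perc_def torus_pmf_def torus_site_def by (simp add: comp_def)

lemma prob_perc_compl:
  "measure_pmf.prob (torus_pmf M lam \<eta>) {w. w \<circ> torus_site M \<eta> \<notin> E} =
   1 - measure_pmf.prob (perc M lam \<eta>) E"
proof -
  have "{w. w \<circ> torus_site M \<eta> \<notin> E} = UNIV - (\<lambda>w. w \<circ> torus_site M \<eta>) -` E" by auto
  then show ?thesis
    using measure_pmf.prob_compl[of "(\<lambda>w. w \<circ> torus_site M \<eta>) -` E" "torus_pmf M lam \<eta>"]
    by (simp add: perc_eq_map_torus_pmf)
qed

lemma torus_site_lattice_shift [simp]:
  "torus_site M \<eta> (lattice_shift M \<eta> p q z) = torus_site M \<eta> z"
  unfolding torus_site_def lattice_shift_def by simp

lemma torus_site_in_domain: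
  "M > 0 \<Longrightarrow> \<eta> > 0 \<Longrightarrow> torus_site M \<eta> z \<in> {0..<n_cols M \<eta>} \<times> {0..<n_rows M \<eta>}"
  using n_cols_pos n_rows_pos unfolding torus_site_def by auto

lemma torus_site_inj:
  assumes "M > 0" "\<eta> > 0" "torus_site M \<eta> z = torus_site M \<eta> z'"
    and close: "sup_norm2 (torus_pos M \<eta> z - torus_pos M \<eta> z') < 2 * M"
  shows "z = z'"
proof -
  obtain p q where "fst z - fst z' = n_cols M \<eta> * p" "snd z - snd z' = n_rows M \<eta> * q"
    using assms(3) unfolding torus_site_def by (auto simp: mod_eq_dvd_iff elim!: dvdE)
  then have z: "z = lattice_shift M \<eta> p q z'"
    unfolding lattice_shift_def by (simp add: prod_eq_iff algebra_simps)
  then have "torus_pos M \<eta> z - torus_pos M \<eta> z' = (2 * M * of_int p, 2 * M * of_int q)"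
    by (simp add: lattice_translation_torus_pos[OF lattice_translation_lattice_shift[OF assms(1,2)]])
  then have "\<bar>2 * M * of_int p\<bar> < 2 * M" "\<bar>2 * M * of_int q\<bar> < 2 * M"
    using close unfolding sup_norm2_def by auto
  then have "p = 0" "q = 0"
    using assms(1) by (auto simp: abs_mult)
  then show ?thesis using z unfolding lattice_shift_def by simp
qed

lemma thick_annuli_disjoint:
  "2 * R + h < R' - h \<Longrightarrow> thick_annulus M \<eta> c R h \<inter> thick_annulus M \<eta> c R' h = {}"
  unfolding thick_annulus_def by auto

lemma torus_site_thick_annuli_disjoint:
  fixes i j k :: nat
  assumes "M > 0" "0 < \<eta>" "\<eta> < R0" "R0 * 4 ^ k \<le> M" "i < k" "j < k" "i \<noteq> j"
  shows "torus_site M \<eta> ` thick_annulus M \<eta> c (R0 * 4 ^ i) \<eta> \<inter>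
         torus_site M \<eta> ` thick_annulus M \<eta> c (R0 * 4 ^ j) \<eta> = {}"
proof -
  define A where "A j = thick_annulus M \<eta> c (R0 * 4 ^ j) \<eta>" for j :: nat
  have scale_gap: "4 * (R0 * 4 ^ i) \<le> R0 * 4 ^ j" if "i < j" for i j :: nat
  proof -
    have "(4::real) ^ Suc i \<le> 4 ^ j" using that by (intro power_increasing) auto
    then show ?thesis using assms(2,3) by simp
  qed
  have A_disjoint: "A i \<inter> A j = {}" if "i < j" for i j
  proof -
    have "R0 \<le> R0 * 4 ^ i" using assms(2,3) by simp
    then show ?thesis
      unfolding A_def using scale_gap[OF that] assms(3) by (intro thick_annuli_disjoint) linarith
  qed
  have A_close: "sup_norm2 (torus_pos M \<eta> z - torus_pos M \<eta> z') < 2 * M"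
    if "z \<in> A i" "z' \<in> A j" "i < k" "j < k" for z z' i j
  proof -
    have "4 * (R0 * 4 ^ i) \<le> M" "4 * (R0 * 4 ^ j) \<le> M" "4 * R0 \<le> M"
      using scale_gap[of i k] scale_gap[of j k] scale_gap[of 0 k] that assms(4) by auto
    moreover have "sup_norm2 (torus_pos M \<eta> z - torus_pos M \<eta> z') \<le>
        sup_norm2 (torus_pos M \<eta> z - c) + sup_norm2 (torus_pos M \<eta> z' - c)"
      using sup_norm2_diff_le[where a = "torus_pos M \<eta> z" and b = c and c = "torus_pos M \<eta> z'"]
      by (simp add: sup_norm2_minus_commute[of c])
    ultimately show ?thesis
      using that(1,2) assms(3) unfolding A_def thick_annulus_def by auto
  qed
  have "z = z'" if "z \<in> A i" "z' \<in> A j" "torus_site M \<eta> z = torus_site M \<eta> z'" for z z'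
    using torus_site_inj[OF assms(1,2) that(3) A_close[OF that(1,2) assms(5,6)]] .
  moreover have "A i \<inter> A j = {}"
    using A_disjoint assms(7) by (metis Int_commute linorder_neqE_nat)
  ultimately show ?thesis unfolding A_def by blast
qed

lemma prob_no_ring_at_scales_le:
  fixes k :: nat
  assumes "M > 0" "0 < \<eta>" "\<eta> < R0" "R0 * 4 ^ k \<le> M"
    and ring: "\<And>j. j < k \<Longrightarrow>
      measure_pmf.prob (perc M lam \<eta>) (ring_event M \<eta> c (R0 * 4 ^ j) \<delta>) > 99/100"
  shows "measure_pmf.prob (torus_pmf M lam \<eta>)
           {w. \<forall>j<k. w \<circ> torus_site M \<eta> \<notin> ring_event M \<eta> c (R0 * 4 ^ j) \<delta>} \<le> (1/100) ^ k"
proof -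
  have "measure_pmf.prob (torus_pmf M lam \<eta>)
          {w. \<forall>j<k. w \<circ> torus_site M \<eta> \<notin> ring_event M \<eta> c (R0 * 4 ^ j) \<delta>} =
        (\<Prod>j<k. measure_pmf.prob (torus_pmf M lam \<eta>)
          {w. w \<circ> torus_site M \<eta> \<notin> ring_event M \<eta> c (R0 * 4 ^ j) \<delta>})"
    unfolding torus_pmf_def
  proof (rule prob_Pi_pmf_all_indep[where D = "\<lambda>j. torus_site M \<eta> ` thick_annulus M \<eta> c (R0 * 4 ^ j) \<eta>"])
    show "torus_site M \<eta> ` thick_annulus M \<eta> c (R0 * 4 ^ j) \<eta> \<subseteq> {0..<n_cols M \<eta>} \<times> {0..<n_rows M \<eta>}"
      for j
      using torus_site_in_domain[OF assms(1,2)] by blast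
    show "torus_site M \<eta> ` thick_annulus M \<eta> c (R0 * 4 ^ i) \<eta> \<inter>
          torus_site M \<eta> ` thick_annulus M \<eta> c (R0 * 4 ^ j) \<eta> = {}"
      if "i < k" "j < k" "i \<noteq> j" for i j
      using torus_site_thick_annuli_disjoint[OF assms(1-4) that] .
    show "(w \<circ> torus_site M \<eta> \<notin> ring_event M \<eta> c (R0 * 4 ^ j) \<delta>) =
          (w' \<circ> torus_site M \<eta> \<notin> ring_event M \<eta> c (R0 * 4 ^ j) \<delta>)"
      if "\<forall>z\<in>torus_site M \<eta> ` thick_annulus M \<eta> c (R0 * 4 ^ j) \<eta>. w z = w' z" for j w w'
      using ring_event_local[OF assms(1,2), of c "R0 * 4 ^ j" "w \<circ> torus_site M \<eta>" "w' \<circ> torus_site M \<eta>"]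
        ring_event_local[OF assms(1,2), of c "R0 * 4 ^ j" "w' \<circ> torus_site M \<eta>" "w \<circ> torus_site M \<eta>"]
        that by auto
  qed simp
  also have "\<dots> \<le> (\<Prod>j<k. 1/100)"
  proof (intro prod_mono conjI)
    fix j assume "j \<in> {..<k}"
    then show "measure_pmf.prob (torus_pmf M lam \<eta>)
                 {w. w \<circ> torus_site M \<eta> \<notin> ring_event M \<eta> c (R0 * 4 ^ j) \<delta>} \<le> 1/100"
      using ring[of j] by (simp add: prob_perc_compl)
  qed simp
  finally show ?thesis by simp
qed

section \<open>Covering the torus by rings\<close>

definition grid_size :: "real \<Rightarrow> real \<Rightarrow> nat" where
  "grid_size M s = nat \<lceil>2 * M / s\<rceil>"

definition grid_centre :: "real \<Rightarrow> real \<Rightarrow> nat \<Rightarrow> nat \<Rightarrow> real \<times> real" where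
  "grid_centre M s a b = (- M + real a * s + s / 2, - M + real b * s + s / 2)"

lemma grid_coordinate_near:
  assumes "M > 0" "s > 0"
  shows "\<exists>p::int. \<exists>a < grid_size M s. \<bar>t - 2 * M * of_int p - (- M + real a * s + s / 2)\<bar> \<le> s / 2"
proof -
  define p where "p = \<lfloor>(t + M) / (2 * M)\<rfloor>"
  define t' where "t' = t - 2 * M * of_int p"
  have "real_of_int p \<le> (t + M) / (2 * M)" "(t + M) / (2 * M) < real_of_int p + 1"
    unfolding p_def by linarith+
  then have t': "0 \<le> t' + M" "t' + M < 2 * M"
    using assms(1) unfolding t'_def by (simp_all add: field_simps)
  define a where "a = \<lfloor>(t' + M) / s\<rfloor>"
  have "a \<ge> 0" unfolding a_def using t' assms(2) by simp
  have a: "real_of_int a \<le> (t' + M) / s" "(t' + M) / s < real_of_int a + 1"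
    unfolding a_def by linarith+
  have "(t' + M) / s < 2 * M / s" using t' assms(2) by (simp add: divide_strict_right_mono)
  then have "nat a < grid_size M s"
    using a \<open>a \<ge> 0\<close> unfolding grid_size_def by linarith
  moreover have "real (nat a) * s \<le> t' + M" "t' + M < real (nat a) * s + s"
    using a assms(2) \<open>a \<ge> 0\<close> by (simp_all add: field_simps)
  then have "\<bar>t' - (- M + real (nat a) * s + s / 2)\<bar> \<le> s / 2" unfolding abs_le_iff by linarith
  ultimately show ?thesis unfolding t'_def by blast
qed

definition ring_cover_event :: "real \<Rightarrow> real \<Rightarrow> real \<Rightarrow> real \<Rightarrow> real \<Rightarrow> (site \<Rightarrow> bool) set" where
  "ring_cover_event M \<eta> \<delta> \<rho> \<rho>' = {\<omega>. \<forall>x. \<exists>c R. \<rho> \<le> R \<and> R \<le> \<rho>' \<and> surrounds c R x \<and> \<omega> \<in> ring_event M \<eta> c R \<delta>}"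

lemma ring_cover_event_mono:
  "\<rho>\<^sub>2 \<le> \<rho>\<^sub>1 \<Longrightarrow> \<rho>\<^sub>1' \<le> \<rho>\<^sub>2' \<Longrightarrow> ring_cover_event M \<eta> \<delta> \<rho>\<^sub>1 \<rho>\<^sub>1' \<subseteq> ring_cover_event M \<eta> \<delta> \<rho>\<^sub>2 \<rho>\<^sub>2'"
  unfolding ring_cover_event_def by (blast intro: order_trans)

lemma ring_cover_event_of_grid_rings:
  assumes "M > 0" "\<eta> > 0" "R0 > 0"
    and periodic: "\<And>p q z. \<omega> (lattice_shift M \<eta> p q z) = \<omega> z"
    and rings: "\<forall>a<grid_size M R0. \<forall>b<grid_size M R0. \<exists>j<k.
                  \<omega> \<in> ring_event M \<eta> (grid_centre M R0 a b) (R0 * 4 ^ j) \<delta>"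
  shows "\<omega> \<in> ring_cover_event M \<eta> \<delta> R0 (R0 * 4 ^ k)"
  unfolding ring_cover_event_def
proof (intro CollectI allI)
  fix x :: "real \<times> real"
  obtain p a where a: "a < grid_size M R0"
    "\<bar>fst x - 2 * M * of_int p - (- M + real a * R0 + R0 / 2)\<bar> \<le> R0 / 2"
    using grid_coordinate_near[OF assms(1,3)] by blast
  obtain q b where b: "b < grid_size M R0"
    "\<bar>snd x - 2 * M * of_int q - (- M + real b * R0 + R0 / 2)\<bar> \<le> R0 / 2"
    using grid_coordinate_near[OF assms(1,3)] by blast
  define c where "c = grid_centre M R0 a b + (2 * M * of_int p, 2 * M * of_int q)"
  obtain j where "j < k" and ring: "\<omega> \<in> ring_event M \<eta> (grid_centre M R0 a b) (R0 * 4 ^ j) \<delta>"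
    using rings a(1) b(1) by blast
  have "\<omega> \<in> ring_event M \<eta> c (R0 * 4 ^ j) \<delta>"
    unfolding c_def using ring_event_periodic[OF assms(1,2) periodic ring] .
  moreover have "R0 \<le> R0 * 4 ^ j" "R0 * 4 ^ j \<le> R0 * 4 ^ k"
    using assms(3) \<open>j < k\<close> by (simp_all add: power_increasing)
  moreover have "sup_norm2 (x - c) \<le> R0 / 2"
    using a(2) b(2) unfolding sup_norm2_def c_def grid_centre_def by (simp add: algebra_simps)
  then have "surrounds c (R0 * 4 ^ j) x"
    unfolding surrounds_def using \<open>R0 \<le> R0 * 4 ^ j\<close> assms(3) by linarith
  ultimately show "\<exists>c R. R0 \<le> R \<and> R \<le> R0 * 4 ^ k \<and> surrounds c R x \<and> \<omega> \<in> ring_event M \<eta> c R \<delta>"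
    by blast
qed

lemma prob_ring_cover_event_ge:
  fixes k :: nat
  assumes "M > 0" "0 < \<eta>" "\<eta> < R0" "R0 * 4 ^ k \<le> M"
    and rings: "\<And>a b j. a < grid_size M R0 \<Longrightarrow> b < grid_size M R0 \<Longrightarrow> j < k \<Longrightarrow>
       measure_pmf.prob (perc M lam \<eta>) (ring_event M \<eta> (grid_centre M R0 a b) (R0 * 4 ^ j) \<delta>) > 99/100"
  shows "measure_pmf.prob (perc M lam \<eta>) (ring_cover_event M \<eta> \<delta> R0 (R0 * 4 ^ k))
         \<ge> 1 - real (grid_size M R0) ^ 2 * (1/100) ^ k"
proof -
  define G where "G = {..<grid_size M R0} \<times> {..<grid_size M R0}"
  define Bad where "Bad = (\<lambda>(a, b). {w. \<forall>j<k. w \<circ> torus_site M \<eta> \<notin>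
                                         ring_event M \<eta> (grid_centre M R0 a b) (R0 * 4 ^ j) \<delta>})"
  let ?Q = "torus_pmf M lam \<eta>"
  have "{w. w \<circ> torus_site M \<eta> \<notin> ring_cover_event M \<eta> \<delta> R0 (R0 * 4 ^ k)} \<subseteq> (\<Union>g\<in>G. Bad g)"
  proof (rule subsetI, rule ccontr)
    fix w assume "w \<in> {w. w \<circ> torus_site M \<eta> \<notin> ring_cover_event M \<eta> \<delta> R0 (R0 * 4 ^ k)}"
      and "w \<notin> (\<Union>g\<in>G. Bad g)"
    moreover have "\<forall>a<grid_size M R0. \<forall>b<grid_size M R0. \<exists>j<k.
          w \<circ> torus_site M \<eta> \<in> ring_event M \<eta> (grid_centre M R0 a b) (R0 * 4 ^ j) \<delta>"
      using \<open>w \<notin> (\<Union>g\<in>G. Bad g)\<close> unfolding G_def Bad_def by auto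
    then have "w \<circ> torus_site M \<eta> \<in> ring_cover_event M \<eta> \<delta> R0 (R0 * 4 ^ k)"
      using ring_cover_event_of_grid_rings[OF assms(1,2)] assms(2,3) by simp
    ultimately show False by simp
  qed
  then have "measure_pmf.prob ?Q {w. w \<circ> torus_site M \<eta> \<notin> ring_cover_event M \<eta> \<delta> R0 (R0 * 4 ^ k)}
             \<le> measure_pmf.prob ?Q (\<Union>g\<in>G. Bad g)"
    by (intro measure_pmf.finite_measure_mono) auto
  also have "\<dots> \<le> (\<Sum>g\<in>G. measure_pmf.prob ?Q (Bad g))"
    by (intro measure_pmf.finite_measure_subadditive_finite) (auto simp: G_def)
  also have "\<dots> \<le> (\<Sum>g\<in>G. (1/100) ^ k)"
    unfolding G_def Bad_def
    by (intro sum_mono) (auto intro!: prob_no_ring_at_scales_le[OF assms(1-4)] rings)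
  also have "\<dots> = real (grid_size M R0) ^ 2 * (1/100) ^ k"
    unfolding G_def by (simp add: power2_eq_square)
  finally show ?thesis
    unfolding prob_perc_compl by linarith
qed

lemma eventually_prob_ring_cover_event_ge:
  fixes k :: nat
  assumes "M > 0" "R0 > 0" "R0 * 4 ^ k \<le> M"
    and ring_lemma: "\<And>c R. R0 \<le> R \<Longrightarrow> R \<le> R0 * 4 ^ k \<Longrightarrow>
      \<forall>\<^sub>F \<eta> in at_right 0. measure_pmf.prob (perc M lam \<eta>) (ring_event M \<eta> c R \<delta>) > 1 - 1/100"
  shows "\<forall>\<^sub>F \<eta> in at_right 0. measure_pmf.prob (perc M lam \<eta>) (ring_cover_event M \<eta> \<delta> R0 (R0 * 4 ^ k))
           \<ge> 1 - real (grid_size M R0) ^ 2 * (1/100) ^ k"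
proof -
  define X where "X = {..<grid_size M R0} \<times> {..<grid_size M R0} \<times> {..<k}"
  have "\<forall>\<^sub>F \<eta> in at_right 0. 0 < \<eta> \<and> \<eta> < R0"
    unfolding eventually_at_right_field using assms(2) by (intro exI[of _ R0]) auto
  moreover have "\<forall>\<^sub>F \<eta> in at_right 0. \<forall>(a, b, j)\<in>X. measure_pmf.prob (perc M lam \<eta>)
                    (ring_event M \<eta> (grid_centre M R0 a b) (R0 * 4 ^ j) \<delta>) > 1 - 1/100"
  proof (intro eventually_ball_finite ballI)
    show "finite X" unfolding X_def by simp
    fix t assume "t \<in> X"
    then obtain a b j where t: "t = (a, b, j)" "j < k" unfolding X_def by auto
    have "R0 \<le> R0 * 4 ^ j" "R0 * 4 ^ j \<le> R0 * 4 ^ k"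
      using assms(2) \<open>j < k\<close> by (simp_all add: power_increasing)
    then show "\<forall>\<^sub>F \<eta> in at_right 0. case t of (a, b, j) \<Rightarrow> measure_pmf.prob (perc M lam \<eta>)
                 (ring_event M \<eta> (grid_centre M R0 a b) (R0 * 4 ^ j) \<delta>) > 1 - 1/100"
      using ring_lemma t(1) by simp
  qed
  ultimately show ?thesis
  proof eventually_elim
    case (elim \<eta>)
    then show ?case
      by (intro prob_ring_cover_event_ge[OF assms(1) _ _ assms(3)]) (auto simp: X_def)
  qed
qed

lemma grid_size_times_decay_small:
  assumes "M > 0" "m > 0" "\<alpha> > 0"
  shows "\<exists>k::nat. real (grid_size M (m / 4 ^ k)) ^ 2 * (1/100) ^ k < \<alpha>"
proof -
  define K where "K = (2 * M / m + 1) ^ 2"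
  have "2 * M / m + 1 > 0" using divide_pos_pos[of "2 * M" m] assms by linarith
  then have "K > 0" unfolding K_def by simp
  obtain k :: nat where k: "(16/100 :: real) ^ k < \<alpha> / K"
    using real_arch_pow_inv[of "\<alpha> / K" "16/100"] assms(3) \<open>K > 0\<close> by auto
  have "real (grid_size M (m / 4 ^ k)) = real_of_int \<lceil>2 * M / (m / 4 ^ k)\<rceil>"
    unfolding grid_size_def using assms by simp
  also have "\<dots> \<le> 2 * M / (m / 4 ^ k) + 1"
    by linarith
  also have "\<dots> \<le> (2 * M / m + 1) * 4 ^ k"
    using one_le_power[of "4::real" k] by (simp add: algebra_simps)
  finally have "real (grid_size M (m / 4 ^ k)) ^ 2 * (1/100) ^ k \<le> ((2 * M / m + 1) * 4 ^ k) ^ 2 * (1/100) ^ k"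
    by (intro mult_right_mono power_mono) auto
  also have "\<dots> = K * ((4 ^ k) ^ 2 * (1/100) ^ k)"
    unfolding K_def by (simp add: power_mult_distrib)
  also have "\<dots> = K * (16/100) ^ k"
    by (simp add: power2_eq_square flip: power_mult_distrib)
  also have "\<dots> < \<alpha>"
    using k \<open>K > 0\<close> by (simp add: field_simps)
  finally show ?thesis by blast
qed

theorem mainTheorem7:
  fixes \<delta> M :: real
  assumes delta_pos: "\<delta> > 0"
    and M_pos: "M > 0"
    and local_ring_lemma:
      "\<And>c lam R. lam < -1 \<Longrightarrow> 0 < R \<Longrightarrow> R \<le> \<bar>lam\<bar> powr (-4/3) \<Longrightarrow>
         \<forall>\<^sub>F \<eta> in at_right 0.
           measure_pmf.prob (perc M lam \<eta>) (ring_event M \<eta> c R \<delta>) > 1 - 1/100"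
  shows "\<forall>lam < -1. \<forall>\<alpha> > 0. \<exists>r. 0 < r \<and> r < \<delta> / 2 * \<bar>lam\<bar> powr (-4/3) \<and>
           (\<forall>\<^sub>F \<eta> in at_right 0.
              measure_pmf.prob (perc M lam \<eta>)
                {\<omega>. \<forall>x. \<exists>c R. r / \<delta> \<le> R \<and> R \<le> \<bar>lam\<bar> powr (-4/3) \<and>
                        surrounds c R x \<and> \<omega> \<in> ring_event M \<eta> c R \<delta>}
              \<ge> 1 - \<alpha>)"
  unfolding ring_cover_event_def[symmetric]
proof (intro allI impI)
  fix lam \<alpha> :: real
  assume lam: "lam < -1" and "\<alpha> > 0"
  let ?L = "\<bar>lam\<bar> powr (-4/3)"
  define m where "m = min ?L M / 8"
  have m: "0 < m" "m \<le> ?L / 8" "m \<le> M"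
    using lam M_pos unfolding m_def by auto
  obtain k :: nat where k: "real (grid_size M (m / 4 ^ k)) ^ 2 * (1/100) ^ k < \<alpha>"
    using grid_size_times_decay_small[OF M_pos \<open>m > 0\<close> \<open>\<alpha> > 0\<close>] by blast
  define R0 where "R0 = m / 4 ^ k"
  have R0: "0 < R0" "R0 \<le> m" "R0 * 4 ^ k = m"
    using m unfolding R0_def by (auto simp: divide_le_eq)
  have cover: "\<forall>\<^sub>F \<eta> in at_right 0. measure_pmf.prob (perc M lam \<eta>) (ring_cover_event M \<eta> \<delta> R0 (R0 * 4 ^ k))
                 \<ge> 1 - real (grid_size M R0) ^ 2 * (1/100) ^ k"
    using R0 m by (intro eventually_prob_ring_cover_event_ge[OF M_pos] local_ring_lemma[OF lam]) auto
  show "\<exists>r. 0 < r \<and> r < \<delta> / 2 * ?L \<and>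
          (\<forall>\<^sub>F \<eta> in at_right 0. measure_pmf.prob (perc M lam \<eta>) (ring_cover_event M \<eta> \<delta> (r / \<delta>) ?L) \<ge> 1 - \<alpha>)"
  proof (intro exI[of _ "\<delta> * R0"] conjI)
    show "0 < \<delta> * R0" "\<delta> * R0 < \<delta> / 2 * ?L"
      using delta_pos R0 m by auto
    have mono: "measure_pmf.prob (perc M lam \<eta>) (ring_cover_event M \<eta> \<delta> R0 (R0 * 4 ^ k)) \<le>
          measure_pmf.prob (perc M lam \<eta>) (ring_cover_event M \<eta> \<delta> (\<delta> * R0 / \<delta>) ?L)" for \<eta>
      using delta_pos R0 m by (intro measure_pmf.finite_measure_mono ring_cover_event_mono) auto
    from cover show "\<forall>\<^sub>F \<eta> in at_right 0.
                 measure_pmf.prob (perc M lam \<eta>) (ring_cover_event M \<eta> \<delta> (\<delta> * R0 / \<delta>) ?L) \<ge> 1 - \<alpha>"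
    proof eventually_elim
      case (elim \<eta>)
      then show ?case using mono[of \<eta>] k unfolding R0_def by linarith
    qed
  qed
qed

end
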